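(* Let $M\subset\mathbb{C}^n$ be a bounded domain with the uniform squeezing property. Then $M$ is pseudoconvex.
   Context: $B_r(x)$ is the Euclidean ball of radius $r$ about $x$. A bounded domain $M\subset\mathbb{C}^n$ has the uniform squeezing property if there are constants $0<a<b$ such that for each $x\in M$ there is a holomorphic embedding $\varphi_x:M\to\mathbb{C}^n$ with $\varphi_x(x)=0$ and $B_a(0)\subset\varphi_x(M)\subset B_b(0)$. *)

theory Defs
  imports "HOL-Analysis.Analysis"
begin

text \<open>C^n is modelled as complex ^ 'n (Euclidean norm). Complex scalar
multiplication of vectors is (*s).\<close>

definition holomorphic_map_on ::
  "(complex ^ 'n \<Rightarrow> complex ^ 'm) \<Rightarrow> (complex ^ 'n) set \<Rightarrow> bool" where
  "holomorphic_map_on f U \<longleftrightarrow>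
     (\<forall>x\<in>U. \<exists>L. (f has_derivative L) (at x) \<and>
                 (\<forall>c v. L (c *s v) = c *s L v))"

definition holomorphic_embedding ::
  "(complex ^ 'n \<Rightarrow> complex ^ 'm) \<Rightarrow> (complex ^ 'n) set \<Rightarrow> bool" where
  "holomorphic_embedding f U \<longleftrightarrow> holomorphic_map_on f U \<and> inj_on f U"

definition domain :: "(complex ^ 'n) set \<Rightarrow> bool" where
  "domain M \<longleftrightarrow> open M \<and> connected M \<and> M \<noteq> {}"

definition uniform_squeezing :: "(complex ^ 'n) set \<Rightarrow> bool" where
  "uniform_squeezing M \<longleftrightarrow>
     (\<exists>a b::real. 0 < a \<and> a < b \<and>
        (\<forall>x\<in>M. \<exists>\<phi> :: complex ^ 'n \<Rightarrow> complex ^ 'n.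
            holomorphic_embedding \<phi> M \<and> \<phi> x = 0 \<and>
            ball 0 a \<subseteq> \<phi> ` M \<and> \<phi> ` M \<subseteq> ball 0 b))"

text \<open>Plurisubharmonic (for continuous real functions, which suffices below):
continuity plus the sub-mean-value inequality on every closed complex disc
{a + \<zeta> w : |\<zeta>| \<le> r} contained in U.\<close>

definition plurisubharmonic_on ::
  "(complex ^ 'n \<Rightarrow> real) \<Rightarrow> (complex ^ 'n) set \<Rightarrow> bool" where
  "plurisubharmonic_on u U \<longleftrightarrow> continuous_on U u \<and>
     (\<forall>a w r. a \<in> U \<and> 0 < r \<and>
        (\<forall>\<zeta>::complex. cmod \<zeta> \<le> r \<longrightarrow> a + \<zeta> *s w \<in> U) \<longrightarrow>
        u a \<le> integral {0..2*pi} (\<lambda>t. u (a + (of_real r * cis t) *s w)) / (2*pi))"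

text \<open>Pseudoconvexity (Hartogs): -log of the Euclidean distance to the
boundary (complement) is plurisubharmonic.\<close>

definition pseudoconvex :: "(complex ^ 'n) set \<Rightarrow> bool" where
  "pseudoconvex M \<longleftrightarrow> plurisubharmonic_on (\<lambda>z. - ln (infdist z (- M))) M"

end

theory Submission
  imports Defs "HOL-Complex_Analysis.Cauchy_Integral_Formula" "HOL-Computational_Algebra.Polynomial"
begin

text \<open>Pseudoconvexity is the sub-mean-value inequality for \<open>-log d\<close> on closed complex discs in \<open>M\<close>,
  where \<open>d\<close> is the distance to the complement. On the boundary circle of such a disc approximate
  \<open>-log d\<close> by \<open>Re p\<close> for a polynomial \<open>p\<close> (Stone--Weierstrass). Pushing the disc in a direction
  \<open>\<xi>\<close> with \<open>|\<xi>| < exp (-e)\<close> by \<open>t exp (-p \<zeta>) \<xi>\<close>, \<open>0 \<le> t \<le> 1\<close>, keeps the boundary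
  circles inside \<open>M\<close>. Uniform squeezing yields a continuity principle (Kontinuitaetssatz): in a
  squeezing chart the Cauchy estimates, with constants independent of the base point, confine nearby
  discs to a fixed compact subset of \<open>M\<close>, so the whole pushed disc stays in \<open>M\<close>. Hence \<open>d\<close> at
  the centre is at least \<open>exp (-e - Re p 0)\<close>, and the mean value property of \<open>Re p\<close> gives the
  inequality.\<close>

section \<open>Holomorphic discs and Cauchy estimates\<close>

lemma norm_vector_smult: "norm (c *s (v::complex^'n)) = cmod c * norm v"
  unfolding norm_vec_def by (simp add: L2_set_right_distrib norm_mult)

lemma has_derivative_vector_smult_right:
  assumes "(g has_field_derivative g') (at z)"
  shows "((\<lambda>z. g z *s (v::complex^'n)) has_derivative (\<lambda>h. h *s (g' *s v))) (at z)"
proof -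
  have "bounded_linear (\<lambda>c::complex. c *s v)"
  proof
    show "(c1 + c2) *s v = c1 *s v + c2 *s v" for c1 c2 by (simp add: vector_sadd_rdistrib)
    show "(r *\<^sub>R c) *s v = r *\<^sub>R (c *s v)" for r c by (vector scaleR_conv_of_real)
    show "\<exists>K. \<forall>c. norm (c *s v) \<le> norm c * K" by (rule exI[of _ "norm v"]) (simp add: norm_vector_smult)
  qed
  from bounded_linear.has_derivative[OF this assms[unfolded has_field_derivative_def]]
  show ?thesis by (simp add: vector_smult_assoc mult.commute)
qed

definition entire_curve :: "(complex \<Rightarrow> complex ^ 'n) \<Rightarrow> bool" where
  "entire_curve f \<longleftrightarrow> (\<forall>w. \<exists>v. (f has_derivative (\<lambda>h. h *s v)) (at w))"

lemma entire_curve_smult: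
  assumes "g holomorphic_on UNIV"
  shows "entire_curve (\<lambda>z. g z *s v)"
  unfolding entire_curve_def
  using has_derivative_vector_smult_right[OF holomorphic_derivI[OF assms open_UNIV UNIV_I]] by blast

lemma entire_curve_add:
  assumes "entire_curve f" "entire_curve g"
  shows "entire_curve (\<lambda>z. f z + g z)"
  unfolding entire_curve_def
proof
  fix w
  obtain u v where "(f has_derivative (\<lambda>h. h *s u)) (at w)" "(g has_derivative (\<lambda>h. h *s v)) (at w)"
    using assms unfolding entire_curve_def by blast
  from has_derivative_add[OF this] show "\<exists>v. ((\<lambda>z. f z + g z) has_derivative (\<lambda>h. h *s v)) (at w)"
    by (intro exI[of _ "u + v"]) (simp add: vector_add_ldistrib)
qed

lemma entire_curve_const: "entire_curve (\<lambda>z. c)"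
  unfolding entire_curve_def by (auto intro!: exI[of _ 0])

lemma entire_curve_continuous_on: "entire_curve f \<Longrightarrow> continuous_on S f"
  unfolding entire_curve_def
  by (meson continuous_at_imp_continuous_on has_derivative_continuous)

lemma holomorphic_map_on_continuous_on: "holomorphic_map_on \<phi> M \<Longrightarrow> continuous_on M \<phi>"
  unfolding holomorphic_map_on_def
  by (meson continuous_at_imp_continuous_on has_derivative_continuous)

lemma holomorphic_on_component_comp:
  assumes hol: "holomorphic_map_on \<phi> M" and f: "entire_curve f" and fU: "f ` U \<subseteq> M"
  shows "(\<lambda>w. \<phi> (f w) $ i) holomorphic_on U"
  unfolding holomorphic_on_def
proof
  fix w assume w: "w \<in> U"
  obtain v where dv: "(f has_derivative (\<lambda>h. h *s v)) (at w)"
    using f unfolding entire_curve_def by blast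
  obtain L where dL: "(\<phi> has_derivative L) (at (f w))" and lin: "\<forall>c v. L (c *s v) = c *s L v"
    using hol fU w unfolding holomorphic_map_on_def by blast
  have "((\<lambda>w. \<phi> (f w) $ i) has_derivative (\<lambda>h. L (h *s v) $ i)) (at w)"
    using bounded_linear.has_derivative[OF bounded_linear_vec_nth has_derivative_compose[OF dv dL]] .
  moreover have "(\<lambda>h. L (h *s v) $ i) = (*) (L v $ i)"
    using lin by (auto simp: mult.commute)
  ultimately show "(\<lambda>w. \<phi> (f w) $ i) field_differentiable at w within U"
    by (auto simp: field_differentiable_def has_field_derivative_def intro: has_derivative_at_withinI)
qed

lemma holomorphic_into_ball_lipschitz:
  fixes g :: "complex \<Rightarrow> complex"
  assumes hol: "g holomorphic_on ball 0 1" and into: "g ` ball 0 1 \<subseteq> ball 0 b"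
    and s: "0 \<le> s" "s < 1" and \<zeta>: "\<zeta> \<in> cball 0 s" "\<zeta>' \<in> cball 0 s"
  shows "dist (g \<zeta>) (g \<zeta>') \<le> 2 * b / (1 - s) * dist \<zeta> \<zeta>'"
proof -
  define r where "r = (1 - s) / 2"
  have r: "r > 0" using s by (simp add: r_def)
  have deriv_bound: "cmod (deriv g w) \<le> 2 * b / (1 - s)" if w: "w \<in> cball 0 s" for w
  proof -
    have sub: "cball w r \<subseteq> ball 0 1"
    proof
      fix y assume "y \<in> cball w r"
      then have "cmod y \<le> cmod w + r"
        using norm_triangle_ineq2[of y w] by (auto simp: dist_norm norm_minus_commute)
      also have "\<dots> < 1" using w s unfolding r_def by (simp add: field_simps)
      finally show "y \<in> ball 0 1" by simp
    qed
    have "cmod ((deriv ^^ 1) g w) \<le> fact 1 * b / r ^ 1"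
    proof (rule Cauchy_higher_deriv_bound[where y=0])
      show "g holomorphic_on ball w r"
        using holomorphic_on_subset[OF hol] sub ball_subset_cball by blast
      show "continuous_on (cball w r) g"
        using holomorphic_on_imp_continuous_on[OF holomorphic_on_subset[OF hol sub]] .
      show "g y \<in> ball 0 b" if "y \<in> ball w r" for y
        using into sub ball_subset_cball that by blast
    qed (simp_all add: r)
    then show ?thesis by (simp add: r_def mult.commute)
  qed
  have "cmod (g \<zeta> - g \<zeta>') \<le> 2 * b / (1 - s) * cmod (\<zeta> - \<zeta>')"
  proof (rule field_differentiable_bound[OF convex_cball _ deriv_bound \<zeta>])
    show "(g has_field_derivative deriv g w) (at w within cball 0 s)" if "w \<in> cball 0 s" for w
      by (rule holomorphic_derivI[OF hol open_ball]) (use that s in auto)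
  qed
  then show ?thesis by (simp add: dist_norm)
qed

lemma holomorphic_map_comp_curve_lipschitz:
  fixes \<phi> :: "complex ^ 'n \<Rightarrow> complex ^ 'm"
  assumes hol: "holomorphic_map_on \<phi> M" and into: "\<phi> ` M \<subseteq> ball 0 b"
    and f: "entire_curve f" and fM: "f ` ball 0 1 \<subseteq> M"
    and s: "0 \<le> s" "s < 1" and \<zeta>: "\<zeta> \<in> cball 0 s" "\<zeta>' \<in> cball 0 s"
  shows "dist (\<phi> (f \<zeta>)) (\<phi> (f \<zeta>')) \<le> CARD('m) * (2 * b / (1 - s)) * dist \<zeta> \<zeta>'"
proof -
  have component: "dist (\<phi> (f \<zeta>) $ i) (\<phi> (f \<zeta>') $ i) \<le> 2 * b / (1 - s) * dist \<zeta> \<zeta>'" for i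
  proof (rule holomorphic_into_ball_lipschitz[OF holomorphic_on_component_comp[OF hol f fM] _ s \<zeta>])
    show "(\<lambda>w. \<phi> (f w) $ i) ` ball 0 1 \<subseteq> ball 0 b"
    proof (rule image_subsetI)
      fix w :: complex assume "w \<in> ball 0 1"
      then have "\<phi> (f w) \<in> ball 0 b" using into fM by blast
      then show "\<phi> (f w) $ i \<in> ball 0 b"
        using Finite_Cartesian_Product.norm_nth_le[of "\<phi> (f w)" i] by simp
    qed
  qed
  have "dist (\<phi> (f \<zeta>)) (\<phi> (f \<zeta>')) \<le> (\<Sum>i\<in>UNIV. dist (\<phi> (f \<zeta>) $ i) (\<phi> (f \<zeta>') $ i))"
    unfolding dist_vec_def by (rule L2_set_le_sum) simp
  also have "\<dots> \<le> (\<Sum>i\<in>(UNIV::'m set). 2 * b / (1 - s) * dist \<zeta> \<zeta>')"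
    by (rule sum_mono) (rule component)
  finally show ?thesis by simp
qed

section \<open>Squeezing charts\<close>

definition squeezing_bounds :: "real \<Rightarrow> real \<Rightarrow> (complex ^ 'n) set \<Rightarrow> bool" where
  "squeezing_bounds a b M \<longleftrightarrow>
     (\<forall>x\<in>M. \<exists>\<phi> :: complex ^ 'n \<Rightarrow> complex ^ 'n.
        holomorphic_embedding \<phi> M \<and> \<phi> x = 0 \<and> ball 0 a \<subseteq> \<phi> ` M \<and> \<phi> ` M \<subseteq> ball 0 b)"

lemma uniform_squeezing_iff_squeezing_bounds:
  "uniform_squeezing M \<longleftrightarrow> (\<exists>a b. 0 < a \<and> a < b \<and> squeezing_bounds a b M)"
  unfolding uniform_squeezing_def squeezing_bounds_def ..

lemma compact_chart_sublevel:
  fixes \<phi> :: "complex ^ 'n \<Rightarrow> complex ^ 'n"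
  assumes M: "open M" and emb: "holomorphic_embedding \<phi> M" and a: "ball 0 a \<subseteq> \<phi> ` M" and r: "r < a"
  shows "compact {y \<in> M. norm (\<phi> y) \<le> r}"
proof -
  have cont: "continuous_on M \<phi>" and inj: "inj_on \<phi> M"
    using emb holomorphic_map_on_continuous_on by (auto simp: holomorphic_embedding_def)
  have cb: "cball 0 r \<subseteq> \<phi> ` M" using a r by (auto simp: subset_iff)
  have "continuous_on (\<phi> ` M) (inv_into M \<phi>)"
    by (rule continuous_on_inverse_open[OF M cont]) (auto simp: inv_into_f_f[OF inj])
  then have "compact (inv_into M \<phi> ` cball 0 r)"
    by (intro compact_continuous_image compact_cball continuous_on_subset[OF _ cb])
  also have "inv_into M \<phi> ` cball 0 r = {y \<in> M. norm (\<phi> y) \<le> r}"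
  proof (intro equalityI subsetI)
    fix y assume "y \<in> inv_into M \<phi> ` cball 0 r"
    then obtain x where x: "x \<in> cball 0 r" "y = inv_into M \<phi> x" by blast
    then have "x \<in> \<phi> ` M" using cb by blast
    then show "y \<in> {y \<in> M. norm (\<phi> y) \<le> r}"
      using x by (simp add: inv_into_into f_inv_into_f)
  next
    fix y assume "y \<in> {y \<in> M. norm (\<phi> y) \<le> r}"
    then show "y \<in> inv_into M \<phi> ` cball 0 r"
      by (intro image_eqI[of _ _ "\<phi> y"]) (simp_all add: inv_into_f_f[OF inj])
  qed
  finally show ?thesis .
qed

text \<open>The uniformity of the squeezing constants is what makes \<open>\<eta>\<close> independent of the base point \<open>z\<close>.\<close>

lemma squeezing_bounds_trap_discs:
  fixes M :: "(complex ^ 'n) set"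
  assumes sq: "squeezing_bounds a b M" and M: "open M" and ab: "0 < a" "a < b"
    and s: "0 \<le> s" "s < 1"
  obtains \<eta> where "\<eta> > 0" and
    "\<And>z. z \<in> M \<Longrightarrow> \<exists>S \<rho>. compact S \<and> S \<subseteq> M \<and> \<rho> > 0 \<and>
        (\<forall>f \<zeta> \<zeta>'. entire_curve f \<and> f ` ball 0 1 \<subseteq> M \<and> \<zeta> \<in> cball 0 s \<and> \<zeta>' \<in> cball 0 s \<and>
                  dist \<zeta> \<zeta>' < \<eta> \<and> dist (f \<zeta>') z < \<rho> \<longrightarrow> f \<zeta> \<in> S)"
proof
  define K where "K = CARD('n) * (2 * b / (1 - s))"
  have K: "K > 0" using ab s by (simp add: K_def)
  show "a / (4 * K) > 0" using ab K by simp
  fix z assume z: "z \<in> M"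
  obtain \<phi> :: "complex ^ 'n \<Rightarrow> complex ^ 'n" where
    \<phi>: "holomorphic_embedding \<phi> M" "\<phi> z = 0" "ball 0 a \<subseteq> \<phi> ` M" "\<phi> ` M \<subseteq> ball 0 b"
    using sq z unfolding squeezing_bounds_def by blast
  have hol: "holomorphic_map_on \<phi> M" using \<phi>(1) by (simp add: holomorphic_embedding_def)
  have "isCont \<phi> z"
    using holomorphic_map_on_continuous_on[OF hol] M z by (simp add: continuous_on_eq_continuous_at)
  then obtain \<rho> where \<rho>: "\<rho> > 0" "\<And>y. dist y z < \<rho> \<Longrightarrow> dist (\<phi> y) (\<phi> z) < a/4"
    using ab unfolding continuous_at_eps_delta by (metis zero_less_divide_iff zero_less_numeral)
  show "\<exists>S \<rho>. compact S \<and> S \<subseteq> M \<and> \<rho> > 0 \<and>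
        (\<forall>f \<zeta> \<zeta>'. entire_curve f \<and> f ` ball 0 1 \<subseteq> M \<and> \<zeta> \<in> cball 0 s \<and> \<zeta>' \<in> cball 0 s \<and>
                  dist \<zeta> \<zeta>' < a / (4 * K) \<and> dist (f \<zeta>') z < \<rho> \<longrightarrow> f \<zeta> \<in> S)"
  proof (intro exI conjI allI impI)
    show "compact {y \<in> M. norm (\<phi> y) \<le> a/2}"
      by (rule compact_chart_sublevel[OF M \<phi>(1,3)]) (use ab in simp)
    fix f \<zeta> \<zeta>'
    assume "entire_curve f \<and> f ` ball 0 1 \<subseteq> M \<and> \<zeta> \<in> cball 0 s \<and> \<zeta>' \<in> cball 0 s \<and>
            dist \<zeta> \<zeta>' < a / (4 * K) \<and> dist (f \<zeta>') z < \<rho>"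
    then have f: "entire_curve f" "f ` ball 0 1 \<subseteq> M" and \<zeta>: "\<zeta> \<in> cball 0 s" "\<zeta>' \<in> cball 0 s"
      and close: "dist \<zeta> \<zeta>' < a / (4 * K)" "dist (f \<zeta>') z < \<rho>" by auto
    have "dist (\<phi> (f \<zeta>)) (\<phi> (f \<zeta>')) \<le> K * dist \<zeta> \<zeta>'"
      unfolding K_def by (rule holomorphic_map_comp_curve_lipschitz[OF hol \<phi>(4) f s \<zeta>])
    also have "\<dots> < a/4"
      using mult_strict_left_mono[OF close(1) K] K by simp
    finally have "norm (\<phi> (f \<zeta>)) < a/2"
      using \<rho>(2)[OF close(2)] \<phi>(2) norm_triangle_ineq2[of "\<phi> (f \<zeta>)" "\<phi> (f \<zeta>')"]
      by (simp add: dist_norm)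
    moreover have "f \<zeta> \<in> M" using f(2) \<zeta>(1) s by auto
    ultimately show "f \<zeta> \<in> {y \<in> M. norm (\<phi> y) \<le> a/2}" by simp
  qed (use \<rho> in auto)
qed

section \<open>The continuity principle\<close>

lemma disc_family_inside_open:
  fixes F :: "real \<Rightarrow> complex \<Rightarrow> 'a::metric_space"
  assumes M: "open M" and cont: "\<And>t. continuous_on (cball 0 1) (F t)"
    and lip: "\<And>t t' w. cmod w \<le> 1 \<Longrightarrow> dist (F t w) (F t' w) \<le> C * \<bar>t - t'\<bar>"
  shows "open {t. F t ` cball 0 1 \<subseteq> M}"
  unfolding open_dist
proof (intro ballI)
  fix t0 assume t0: "t0 \<in> {t. F t ` cball 0 1 \<subseteq> M}"
  have C: "0 \<le> C" using order_trans[OF zero_le_dist lip[of 0 0 1]] by simp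
  obtain \<epsilon> where \<epsilon>: "\<epsilon> > 0" "(\<Union>x\<in>F t0 ` cball 0 1. ball x \<epsilon>) \<subseteq> M"
    using compact_subset_open_imp_ball_epsilon_subset[OF compact_continuous_image[OF cont compact_cball] M] t0
    by blast
  show "\<exists>e>0. \<forall>t. dist t t0 < e \<longrightarrow> t \<in> {t. F t ` cball 0 1 \<subseteq> M}"
  proof (intro exI conjI allI impI)
    show "\<epsilon> / (C + 1) > 0" using \<epsilon> C by simp
    fix t assume t: "dist t t0 < \<epsilon> / (C + 1)"
    have "F t w \<in> M" if w: "w \<in> cball 0 1" for w
    proof -
      have "dist (F t0 w) (F t w) \<le> C * \<bar>t0 - t\<bar>" using lip w by simp
      also have "\<dots> \<le> C * (\<epsilon> / (C + 1))"
        using t C by (intro mult_left_mono) (auto simp: dist_real_def)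
      also have "\<dots> < \<epsilon>" using C \<epsilon> by (simp add: field_simps)
      finally have "F t w \<in> ball (F t0 w) \<epsilon>" by simp
      then show ?thesis using \<epsilon>(2) w by blast
    qed
    then show "t \<in> {t. F t ` cball 0 1 \<subseteq> M}" by blast
  qed
qed

text \<open>The squeezing chart at a point \<open>F t0 \<zeta>'\<close> of \<open>M\<close> close to \<open>F t0 \<zeta>\<close> confines \<open>F t \<zeta>\<close>,
  for admissible \<open>t\<close> near \<open>t0\<close>, to a compact subset of \<open>M\<close>; so the limit \<open>F t0 \<zeta>\<close> lies in it too.\<close>

lemma squeezing_disc_family_closure:
  fixes F :: "real \<Rightarrow> complex \<Rightarrow> complex ^ 'n" and M :: "(complex ^ 'n) set"
  assumes sq: "squeezing_bounds a b M" and M: "open M" and ab: "0 < a" "a < b"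
    and entire: "\<And>t. entire_curve (F t)"
    and lip: "\<And>t t' w. cmod w \<le> 1 \<Longrightarrow> dist (F t w) (F t' w) \<le> C * \<bar>t - t'\<bar>"
    and t0: "t0 \<in> closure {t. F t ` cball 0 1 \<subseteq> M}"
    and \<zeta>: "cmod \<zeta> < 1" "\<zeta> \<in> closure {w. F t0 w \<in> M}"
  shows "F t0 \<zeta> \<in> M"
proof -
  have C: "0 \<le> C" using order_trans[OF zero_le_dist lip[of 0 0 1]] by simp
  define s where "s = (1 + cmod \<zeta>) / 2"
  have s: "0 \<le> s" "s < 1" "cmod \<zeta> < s" using \<zeta>(1) by (auto simp: s_def)
  obtain \<eta> where \<eta>: "\<eta> > 0" and trap: "\<And>z. z \<in> M \<Longrightarrow> \<exists>S \<rho>. compact S \<and> S \<subseteq> M \<and> \<rho> > 0 \<and>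
        (\<forall>f \<zeta> \<zeta>'. entire_curve f \<and> f ` ball 0 1 \<subseteq> M \<and> \<zeta> \<in> cball 0 s \<and> \<zeta>' \<in> cball 0 s \<and>
                  dist \<zeta> \<zeta>' < \<eta> \<and> dist (f \<zeta>') z < \<rho> \<longrightarrow> f \<zeta> \<in> S)"
    using squeezing_bounds_trap_discs[OF sq M ab s(1,2)] by blast
  obtain \<zeta>' where \<zeta>': "F t0 \<zeta>' \<in> M" "dist \<zeta>' \<zeta> < min \<eta> (s - cmod \<zeta>)"
    using \<zeta>(2) \<eta> s(3) unfolding closure_approachable by (metis diff_gt_0_iff_gt min_less_iff_conj mem_Collect_eq)
  have \<zeta>s: "\<zeta> \<in> cball 0 s" "\<zeta>' \<in> cball 0 s"
    using s(3) \<zeta>'(2) norm_triangle_ineq2[of \<zeta>' \<zeta>] by (auto simp: dist_norm)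
  obtain S \<rho> where S: "compact S" "S \<subseteq> M" "\<rho> > 0" and
    trapS: "\<forall>f \<zeta> \<zeta>''. entire_curve f \<and> f ` ball 0 1 \<subseteq> M \<and> \<zeta> \<in> cball 0 s \<and> \<zeta>'' \<in> cball 0 s \<and>
                  dist \<zeta> \<zeta>'' < \<eta> \<and> dist (f \<zeta>'') (F t0 \<zeta>') < \<rho> \<longrightarrow> f \<zeta> \<in> S"
    using trap[OF \<zeta>'(1)] by blast
  have "F t0 \<zeta> \<in> closure S"
    unfolding closure_approachable
  proof (intro allI impI)
    fix \<epsilon> :: real assume \<epsilon>: "\<epsilon> > 0"
    obtain t where t: "F t ` cball 0 1 \<subseteq> M" "dist t t0 < min \<epsilon> \<rho> / (C + 1)"
    proof -
      have "min \<epsilon> \<rho> / (C + 1) > 0" using \<epsilon> S(3) C by simp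
      then show ?thesis using t0 that unfolding closure_approachable by blast
    qed
    have "C * \<bar>t - t0\<bar> \<le> C * (min \<epsilon> \<rho> / (C + 1))"
      using t(2) C by (intro mult_left_mono) (auto simp: dist_real_def)
    also have "\<dots> = C / (C + 1) * min \<epsilon> \<rho>" by simp
    also have "\<dots> < 1 * min \<epsilon> \<rho>"
      by (rule mult_strict_right_mono) (use C \<epsilon> S(3) in auto)
    finally have Ct: "C * \<bar>t - t0\<bar> < min \<epsilon> \<rho>" by simp
    have "F t ` ball 0 1 \<subseteq> M" using t(1) ball_subset_cball by blast
    moreover have "dist (F t \<zeta>') (F t0 \<zeta>') < \<rho>"
      using lip[of \<zeta>' t t0] \<zeta>s(2) s(2) Ct by simp
    ultimately have "F t \<zeta> \<in> S"
      using trapS[rule_format, of "F t" \<zeta> \<zeta>'] entire \<zeta>s \<zeta>'(2) by (auto simp: dist_commute)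
    moreover have "dist (F t \<zeta>) (F t0 \<zeta>) < \<epsilon>" using lip[of \<zeta> t t0] \<zeta>(1) Ct by auto
    ultimately show "\<exists>y\<in>S. dist y (F t0 \<zeta>) < \<epsilon>" by blast
  qed
  then show ?thesis using S(1,2) closure_closed[OF compact_imp_closed] by auto
qed

lemma squeezing_disc_family_inside_closed:
  fixes F :: "real \<Rightarrow> complex \<Rightarrow> complex ^ 'n" and M :: "(complex ^ 'n) set"
  assumes sq: "squeezing_bounds a b M" and M: "open M" and ab: "0 < a" "a < b"
    and entire: "\<And>t. entire_curve (F t)"
    and lip: "\<And>t t' w. cmod w \<le> 1 \<Longrightarrow> dist (F t w) (F t' w) \<le> C * \<bar>t - t'\<bar>"
    and boundary: "\<And>t. t \<in> {0..1} \<Longrightarrow> F t ` sphere 0 1 \<subseteq> M"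
  shows "closed {t \<in> {0..1}. F t ` cball 0 1 \<subseteq> M}"
proof -
  let ?T = "{t \<in> {0..1}. F t ` cball 0 1 \<subseteq> M}"
  have "t0 \<in> ?T" if t0: "t0 \<in> closure ?T" for t0
  proof -
    have "closure ?T \<subseteq> {0..1}" by (rule closure_minimal) auto
    with t0 have t01: "t0 \<in> {0..1}" by blast
    define A where "A = cball 0 1 \<inter> F t0 -` M"
    have "openin (top_of_set (cball 0 1)) A"
      unfolding A_def by (rule continuous_openin_preimage_gen[OF entire_curve_continuous_on[OF entire] M])
    moreover have "closed A"
      unfolding closure_subset_eq[symmetric]
    proof
      fix \<zeta> assume \<zeta>: "\<zeta> \<in> closure A"
      have "closure A \<subseteq> cball 0 1" by (rule closure_minimal) (auto simp: A_def)
      with \<zeta> have \<zeta>1: "\<zeta> \<in> cball 0 1" by blast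
      show "\<zeta> \<in> A"
      proof (cases "cmod \<zeta> = 1")
        case True
        then show ?thesis using boundary[OF t01] \<zeta>1 by (auto simp: A_def)
      next
        case False
        have "F t0 \<zeta> \<in> M"
        proof (rule squeezing_disc_family_closure[OF sq M ab entire lip])
          have "?T \<subseteq> {t. F t ` cball 0 1 \<subseteq> M}" by blast
          then show "t0 \<in> closure {t. F t ` cball 0 1 \<subseteq> M}" using closure_mono t0 by blast
          show "cmod \<zeta> < 1" using False \<zeta>1 by simp
          have "A \<subseteq> {w. F t0 w \<in> M}" by (auto simp: A_def)
          then show "\<zeta> \<in> closure {w. F t0 w \<in> M}" using closure_mono \<zeta> by blast
        qed
        then show ?thesis using \<zeta>1 by (simp add: A_def)
      qed
    qed
    then have "closedin (top_of_set (cball 0 1)) A" by (auto simp: closedin_closed_eq A_def)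
    moreover have "1 \<in> A" using boundary[OF t01] by (auto simp: A_def)
    ultimately have "A = cball 0 1"
      using connected_clopen[THEN iffD1, OF connected_cball] by blast
    then show ?thesis using t01 by (auto simp: A_def)
  qed
  then show ?thesis using closure_subset_eq by blast
qed

theorem kontinuitaetssatz_squeezing:
  fixes F :: "real \<Rightarrow> complex \<Rightarrow> complex ^ 'n" and M :: "(complex ^ 'n) set"
  assumes sq: "squeezing_bounds a b M" and M: "open M" and ab: "0 < a" "a < b"
    and entire: "\<And>t. entire_curve (F t)"
    and lip: "\<And>t t' w. cmod w \<le> 1 \<Longrightarrow> dist (F t w) (F t' w) \<le> C * \<bar>t - t'\<bar>"
    and start: "F 0 ` cball 0 1 \<subseteq> M"
    and boundary: "\<And>t. t \<in> {0..1} \<Longrightarrow> F t ` sphere 0 1 \<subseteq> M"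
  shows "F 1 ` cball 0 1 \<subseteq> M"
proof -
  let ?T = "{t \<in> {0..1}. F t ` cball 0 1 \<subseteq> M}"
  have "openin (top_of_set {0..1}) ?T"
    using openin_open_Int[OF disc_family_inside_open[OF M entire_curve_continuous_on[OF entire] lip]]
    by (metis Collect_conj_eq Collect_mem_eq)
  moreover have "closedin (top_of_set {0..1}) ?T"
    using squeezing_disc_family_inside_closed[OF sq M ab entire lip boundary]
    by (auto simp: closedin_closed_eq)
  moreover have "0 \<in> ?T" using start by simp
  ultimately have "?T = {0..1}"
    using connected_clopen[THEN iffD1, OF connected_Icc] by blast
  then have "1 \<in> ?T" by simp
  then show ?thesis by simp
qed

section \<open>Real parts of polynomials on the unit circle\<close>

lemma holomorphic_circle_mean:
  assumes cont: "continuous_on (cball c r) f" and hol: "f holomorphic_on ball c r" and r: "0 < r"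
  shows "((\<lambda>t. f (c + of_real r * cis t)) has_integral of_real (2 * pi) * f c) {0..2*pi}"
proof -
  have "((\<lambda>u. f u / (u - c)) has_contour_integral (2 * of_real pi * \<i> * f c)) (circlepath c r)"
    using Cauchy_integral_circlepath[OF cont hol] r by simp
  then have "((\<lambda>t. f (c + of_real r * cis t) / (c + of_real r * cis t - c) * of_real r * \<i> * cis t)
               has_integral (2 * of_real pi * \<i> * f c)) {0..2*pi}"
    unfolding circlepath_def by (subst (asm) has_contour_integral_part_circlepath_iff) auto
  moreover have "f (c + of_real r * cis t) / (c + of_real r * cis t - c) * of_real r * \<i> * cis t =
                 \<i> * f (c + of_real r * cis t)" for t
    using r by (simp add: field_simps)
  ultimately have "((\<lambda>t. \<i> * f (c + of_real r * cis t)) has_integral \<i> * (of_real (2 * pi) * f c)) {0..2*pi}"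
    by (simp add: mult_ac)
  from has_integral_mult_right[OF this, of "- \<i>"] show ?thesis
    by (simp add: mult.assoc[symmetric])
qed

lemma poly_holomorphic_on [holomorphic_intros]: "poly p holomorphic_on S"
  unfolding holomorphic_on_def field_differentiable_def
  by (blast intro: poly_DERIV has_field_derivative_at_within)

lemma Re_poly_circle_mean:
  "((\<lambda>t. Re (poly p (cis t))) has_integral 2 * pi * Re (poly p 0)) {0..2*pi}"
proof -
  have "((\<lambda>t. poly p (cis t)) has_integral of_real (2 * pi) * poly p 0) {0..2*pi}"
    using holomorphic_circle_mean[of 0 1 "poly p"] poly_holomorphic_on
    by (simp add: holomorphic_on_imp_continuous_on)
  from has_integral_linear[OF this bounded_linear_Re] show ?thesis by (simp add: o_def)
qed

text \<open>On the unit circle \<open>cnj z = 1 / z\<close>, so each term of \<open>poly q (cnj z)\<close> times \<open>poly p z\<close> is a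
  polynomial in \<open>z\<close> or the conjugate of one, which has the same real part.\<close>

lemma Re_poly_mult_poly_cnj_on_circle:
  "\<exists>r. \<forall>z\<in>sphere (0::complex) 1. Re (poly p z * poly q (cnj z)) = Re (poly r z)"
proof (induction q arbitrary: p)
  case 0
  show ?case by (auto intro: exI[of _ 0])
next
  case (pCons c q)
  obtain p0 p1 where p: "p = pCons p0 p1" by (cases p)
  obtain r1 where r1: "\<forall>z\<in>sphere (0::complex) 1. Re (poly p1 z * poly q (cnj z)) = Re (poly r1 z)"
    using pCons.IH by blast
  define r where "r = smult c p + smult (cnj p0) (pCons 0 (map_poly cnj q)) + r1"
  have "Re (poly p z * poly (pCons c q) (cnj z)) = Re (poly r z)" if z: "z \<in> sphere 0 1" for z
  proof -
    define Q where "Q = poly q (cnj z)"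
    have "cnj z * z = 1" using z complex_norm_square[of z] by (simp add: mult.commute)
    then have "poly p z * poly (pCons c q) (cnj z) = c * poly p z + cnj (cnj p0 * z * cnj Q) + poly p1 z * Q"
      by (simp add: p Q_def algebra_simps)
    then have "Re (poly p z * poly (pCons c q) (cnj z)) =
               Re (c * poly p z) + Re (cnj p0 * z * cnj Q) + Re (poly p1 z * Q)"
      by (simp only: plus_complex.sel cnj.sel)
    also have "cnj p0 * z * cnj Q = poly (smult (cnj p0) (pCons 0 (map_poly cnj q))) z"
      by (simp add: Q_def)
    also have "Re (poly p1 z * Q) = Re (poly r1 z)" using r1 z by (simp add: Q_def)
    finally show ?thesis by (simp add: r_def)
  qed
  then show ?case by blast
qed

lemma Re_poly_mult_Re_poly_on_circle:
  "\<exists>r. \<forall>z\<in>sphere (0::complex) 1. Re (poly p z) * Re (poly q z) = Re (poly r z)"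
proof -
  obtain r1 where r1: "\<forall>z\<in>sphere (0::complex) 1.
      Re (poly p z * poly (map_poly cnj q) (cnj z)) = Re (poly r1 z)"
    using Re_poly_mult_poly_cnj_on_circle by blast
  have "Re (poly p z) * Re (poly q z) = Re (poly (smult (1/2) (p * q + r1)) z)"
    if z: "z \<in> sphere 0 1" for z
  proof -
    have "Re (poly p z) * Re (poly q z) = (Re (poly p z * poly q z) + Re (poly p z * cnj (poly q z))) / 2"
      by (simp add: algebra_simps)
    also have "cnj (poly q z) = poly (map_poly cnj q) (cnj z)" by simp
    also have "Re (poly p z * poly (map_poly cnj q) (cnj z)) = Re (poly r1 z)" using r1 z by blast
    finally show ?thesis by simp
  qed
  then show ?thesis by blast
qed

definition circle_Re_polys :: "(complex \<Rightarrow> real) set" where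
  "circle_Re_polys =
     {f. continuous_on (sphere 0 1) f \<and> (\<exists>p. \<forall>z\<in>sphere 0 1. f z = Re (poly p z))}"

lemma function_ring_on_circle_Re_polys: "function_ring_on circle_Re_polys (sphere 0 1)"
proof
  show "compact (sphere (0::complex) 1)" by simp
  show "continuous_on (sphere 0 1) f" if "f \<in> circle_Re_polys" for f
    using that by (simp add: circle_Re_polys_def)
  show "(\<lambda>x. f x + g x) \<in> circle_Re_polys" if fg: "f \<in> circle_Re_polys" "g \<in> circle_Re_polys" for f g
  proof -
    obtain p q where "\<forall>z\<in>sphere 0 1. f z = Re (poly p z)" "\<forall>z\<in>sphere 0 1. g z = Re (poly q z)"
      using fg by (auto simp: circle_Re_polys_def)
    then have "\<forall>z\<in>sphere 0 1. f z + g z = Re (poly (p + q) z)" by simp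
    moreover have "continuous_on (sphere 0 1) (\<lambda>x. f x + g x)"
      using fg by (auto simp: circle_Re_polys_def intro!: continuous_intros)
    ultimately show ?thesis unfolding circle_Re_polys_def by blast
  qed
  show "(\<lambda>x. f x * g x) \<in> circle_Re_polys" if fg: "f \<in> circle_Re_polys" "g \<in> circle_Re_polys" for f g
  proof -
    obtain p q where pq: "\<forall>z\<in>sphere 0 1. f z = Re (poly p z)" "\<forall>z\<in>sphere 0 1. g z = Re (poly q z)"
      using fg by (auto simp: circle_Re_polys_def)
    obtain r where "\<forall>z\<in>sphere (0::complex) 1. Re (poly p z) * Re (poly q z) = Re (poly r z)"
      using Re_poly_mult_Re_poly_on_circle by blast
    with pq have "\<forall>z\<in>sphere 0 1. f z * g z = Re (poly r z)" by simp
    moreover have "continuous_on (sphere 0 1) (\<lambda>x. f x * g x)"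
      using fg by (auto simp: circle_Re_polys_def intro!: continuous_intros)
    ultimately show ?thesis unfolding circle_Re_polys_def by blast
  qed
  show "(\<lambda>_. c) \<in> circle_Re_polys" for c
    unfolding circle_Re_polys_def by (auto intro!: exI[of _ "[:of_real c:]"])
  show "\<exists>f\<in>circle_Re_polys. f x \<noteq> f y" if "x \<noteq> y" for x y
  proof -
    have "(\<lambda>z. Re z) \<in> circle_Re_polys"
      unfolding circle_Re_polys_def by (auto intro!: exI[of _ "[:0, 1:]"] continuous_intros)
    moreover have "(\<lambda>z. Im z) \<in> circle_Re_polys"
      unfolding circle_Re_polys_def by (auto intro!: exI[of _ "[:0, -\<i>:]"] continuous_intros)
    ultimately show ?thesis using that complex_eqI by metis
  qed
qed

lemma Re_poly_approx_on_circle: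
  assumes V: "continuous_on (sphere 0 1) V" and e: "e > 0"
  obtains p where "\<forall>z\<in>sphere 0 1. \<bar>V z - Re (poly p z)\<bar> < e"
proof -
  obtain F where F: "F \<in> UNIV \<rightarrow> circle_Re_polys" and lim: "uniform_limit (sphere 0 1) F V sequentially"
    using function_ring_on.Stone_Weierstrass[OF function_ring_on_circle_Re_polys V] by blast
  obtain n where n: "\<forall>z\<in>sphere 0 1. dist (F n z) (V z) < e"
    using eventually_sequentially[THEN iffD1, OF uniform_limitD[OF lim e]] by blast
  obtain p where "\<forall>z\<in>sphere 0 1. F n z = Re (poly p z)"
    using F by (auto simp: circle_Re_polys_def)
  with n show ?thesis by (intro that[of p]) (auto simp: dist_real_def abs_minus_commute)
qed

lemma le_circle_mean_by_Re_poly_approx: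
  fixes V :: "complex \<Rightarrow> real"
  assumes V: "continuous_on (sphere 0 1) V"
    and approx: "\<And>p e. e > 0 \<Longrightarrow> \<forall>z\<in>sphere 0 1. \<bar>V z - Re (poly p z)\<bar> < e \<Longrightarrow> u \<le> Re (poly p 0) + e"
  shows "u \<le> integral {0..2*pi} (\<lambda>t. V (cis t)) / (2*pi)"
proof (rule field_le_epsilon)
  fix e :: real assume "0 < e"
  then obtain p where p: "\<forall>z\<in>sphere 0 1. \<bar>V z - Re (poly p z)\<bar> < e/2"
    using Re_poly_approx_on_circle[OF V] by (metis half_gt_zero)
  have mean: "((\<lambda>t. Re (poly p (cis t)) - e/2) has_integral 2*pi * Re (poly p 0) - 2*pi * (e/2)) {0..2*pi}"
    using has_integral_diff[OF Re_poly_circle_mean has_integral_const_real[of "e/2" 0 "2*pi"]] by simp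
  have "continuous_on {0..2*pi} (\<lambda>t. V (cis t))"
    by (rule continuous_on_compose2[OF V]) (auto intro!: continuous_intros)
  moreover have "Re (poly p (cis t)) - e/2 \<le> V (cis t)" for t
  proof -
    have "\<bar>V (cis t) - Re (poly p (cis t))\<bar> < e/2" using p by simp
    then show ?thesis by linarith
  qed
  ultimately have "2*pi * Re (poly p 0) - 2*pi * (e/2) \<le> integral {0..2*pi} (\<lambda>t. V (cis t))"
    by (intro has_integral_le[OF mean integrable_integral] integrable_continuous_interval)
  then have "Re (poly p 0) - e/2 \<le> integral {0..2*pi} (\<lambda>t. V (cis t)) / (2*pi)"
    by (simp add: field_simps)
  moreover have "u \<le> Re (poly p 0) + e/2" using approx p \<open>0 < e\<close> by simp
  ultimately show "u \<le> integral {0..2*pi} (\<lambda>t. V (cis t)) / (2*pi) + e" by simp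
qed

section \<open>The sub-mean-value inequality for \<open>-log d\<close>\<close>

lemma le_infdist_compl_if_ball_subset:
  assumes "ball x R \<subseteq> M" "- M \<noteq> {}"
  shows "R \<le> infdist x (- M)"
  unfolding infdist_notempty[OF assms(2)]
proof (rule cINF_greatest[OF assms(2)])
  show "R \<le> dist x y" if "y \<in> - M" for y
    using assms(1) that by (meson ComplD in_mono mem_ball not_le)
qed

lemma mem_if_dist_le_exp_of_neg_ln_infdist_less:
  assumes M: "open M" "- M \<noteq> {}" and y0: "y0 \<in> M"
    and u: "- ln (infdist y0 (- M)) < u" and x: "dist y0 x \<le> exp (- u)"
  shows "x \<in> M"
proof (rule ccontr)
  assume "x \<notin> M"
  then have "infdist y0 (- M) \<le> dist y0 x" by (intro infdist_le) simp
  moreover have "infdist y0 (- M) > 0"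
    using infdist_pos_not_in_closed[OF closed_Compl M(2)] M(1) y0 by auto
  moreover have "exp (- u) < exp (ln (infdist y0 (- M)))" using u by simp
  ultimately show False using x by simp
qed

lemma dist_add_smult_of_real:
  "dist (c + (of_real t * g) *s \<xi>) (c + (of_real t' * g) *s \<xi>) = \<bar>t - t'\<bar> * cmod g * norm (\<xi>::complex ^ 'n)"
proof -
  have "(of_real t * g) *s \<xi> - (of_real t' * g) *s \<xi> = (of_real (t - t') * g) *s \<xi>"
    by (simp only: vector_sub_rdistrib[symmetric] of_real_diff left_diff_distrib)
  then show ?thesis
    by (simp add: dist_norm norm_vector_smult norm_mult del: of_real_diff)
qed

text \<open>On the boundary circle the push \<open>t exp (-p \<zeta>) \<xi>\<close> is at most \<open>exp (-Re p - e)\<close>, which is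
  below the boundary distance there by the approximation hypothesis.\<close>

lemma squeezing_ball_around_disc_centre:
  fixes M :: "(complex ^ 'n) set"
  assumes sq: "squeezing_bounds a b M" and M: "open M" and ab: "0 < a" "a < b" and nM: "- M \<noteq> {}"
    and r: "0 < r" and disc: "\<And>\<zeta>. cmod \<zeta> \<le> r \<Longrightarrow> a0 + \<zeta> *s w \<in> M"
    and p: "\<forall>z\<in>sphere 0 1. \<bar>- ln (infdist (a0 + (of_real r * z) *s w) (- M)) - Re (poly p z)\<bar> < e"
  shows "ball a0 (exp (- e - Re (poly p 0))) \<subseteq> M"
proof
  fix y assume y: "y \<in> ball a0 (exp (- e - Re (poly p 0)))"
  define \<xi> where "\<xi> = exp (poly p 0) *s (y - a0)"
  have "norm \<xi> = exp (Re (poly p 0)) * dist a0 y"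
    unfolding \<xi>_def norm_vector_smult by (simp add: norm_exp_eq_Re dist_norm norm_minus_commute)
  also have "\<dots> < exp (Re (poly p 0)) * exp (- e - Re (poly p 0))" using y by simp
  finally have \<xi>: "norm \<xi> < exp (- e)" by (simp add: mult_exp_exp)
  define F where "F = (\<lambda>t::real. \<lambda>\<zeta>. a0 + (of_real r * \<zeta>) *s w + (of_real t * exp (- poly p \<zeta>)) *s \<xi>)"
  obtain B where B: "\<And>\<zeta>. \<zeta> \<in> cball 0 1 \<Longrightarrow> cmod (exp (- poly p \<zeta>)) \<le> B"
  proof -
    have "bounded ((\<lambda>\<zeta>. exp (- poly p \<zeta>)) ` cball 0 1)"
      by (intro compact_imp_bounded compact_continuous_image compact_cball) (auto intro!: continuous_intros)
    then show ?thesis using that unfolding bounded_iff by blast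
  qed
  have "F 1 ` cball 0 1 \<subseteq> M"
  proof (rule kontinuitaetssatz_squeezing[OF sq M ab])
    show "entire_curve (F t)" for t
      unfolding F_def
      by (intro entire_curve_add entire_curve_const entire_curve_smult holomorphic_intros)
    show "dist (F t \<zeta>) (F t' \<zeta>) \<le> B * norm \<xi> * \<bar>t - t'\<bar>" if "cmod \<zeta> \<le> 1" for t t' \<zeta>
    proof -
      have "dist (F t \<zeta>) (F t' \<zeta>) = \<bar>t - t'\<bar> * cmod (exp (- poly p \<zeta>)) * norm \<xi>"
        unfolding F_def by (rule dist_add_smult_of_real)
      also have "\<dots> \<le> \<bar>t - t'\<bar> * B * norm \<xi>"
        using B[of \<zeta>] that by (intro mult_right_mono mult_left_mono) auto
      finally show ?thesis by (simp add: mult_ac)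
    qed
    show "F 0 ` cball 0 1 \<subseteq> M"
      using disc r by (auto simp: F_def norm_mult mult_le_cancel_left1)
    show "F t ` sphere 0 1 \<subseteq> M" if t: "t \<in> {0..1}" for t
    proof
      fix x assume "x \<in> F t ` sphere 0 1"
      then obtain \<zeta> where \<zeta>: "cmod \<zeta> = 1" "x = F t \<zeta>" by auto
      define y0 where "y0 = a0 + (of_real r * \<zeta>) *s w"
      show "x \<in> M"
      proof (rule mem_if_dist_le_exp_of_neg_ln_infdist_less[OF M nM])
        show "y0 \<in> M" using disc r \<zeta> by (simp add: y0_def norm_mult)
        have "\<bar>- ln (infdist y0 (- M)) - Re (poly p \<zeta>)\<bar> < e" using p \<zeta> by (simp add: y0_def)
        then show "- ln (infdist y0 (- M)) < Re (poly p \<zeta>) + e" by linarith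
        have "dist y0 x = t * exp (- Re (poly p \<zeta>)) * norm \<xi>"
          using t \<zeta> by (simp add: F_def y0_def dist_norm norm_vector_smult norm_mult norm_exp_eq_Re)
        also have "\<dots> \<le> exp (- Re (poly p \<zeta>)) * exp (- e)"
          using t \<xi> by (intro mult_mono mult_le_one) auto
        finally show "dist y0 x \<le> exp (- (Re (poly p \<zeta>) + e))" by (simp add: exp_add[symmetric])
      qed
    qed
  qed
  moreover have "F 1 0 = y" by (simp add: F_def \<xi>_def vector_smult_assoc exp_minus)
  ultimately show "y \<in> M" by force
qed

lemma squeezing_neg_ln_infdist_sub_mean_value:
  fixes M :: "(complex ^ 'n) set"
  assumes sq: "squeezing_bounds a b M" and M: "open M" and ab: "0 < a" "a < b" and nM: "- M \<noteq> {}"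
    and r: "0 < r" and disc: "\<And>\<zeta>. cmod \<zeta> \<le> r \<Longrightarrow> a0 + \<zeta> *s w \<in> M"
  shows "- ln (infdist a0 (- M)) \<le>
           integral {0..2*pi} (\<lambda>t. - ln (infdist (a0 + (of_real r * cis t) *s w) (- M))) / (2*pi)"
proof -
  have d_pos: "infdist x (- M) > 0" if "x \<in> M" for x
    using infdist_pos_not_in_closed[of "- M" x] M nM that by auto
  have "entire_curve (\<lambda>z. a0 + (of_real r * z) *s w)"
    by (intro entire_curve_add entire_curve_const entire_curve_smult holomorphic_intros)
  then have "continuous_on (sphere 0 1) (\<lambda>z. a0 + (of_real r * z) *s w)"
    by (rule entire_curve_continuous_on)
  moreover have "(\<lambda>z. a0 + (of_real r * z) *s w) ` sphere 0 1 \<subseteq> M"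
    using disc r by (auto simp: norm_mult)
  ultimately have "continuous_on (sphere 0 1) (\<lambda>z. - ln (infdist (a0 + (of_real r * z) *s w) (- M)))"
    using d_pos by (auto intro!: continuous_intros continuous_on_compose2[where f = "\<lambda>x. infdist x (- M)"]
        simp: less_imp_neq[symmetric])
  then show ?thesis
  proof (rule le_circle_mean_by_Re_poly_approx)
    fix p and e :: real
    assume "\<forall>z\<in>sphere 0 1. \<bar>- ln (infdist (a0 + (of_real r * z) *s w) (- M)) - Re (poly p z)\<bar> < e"
    then have "exp (- e - Re (poly p 0)) \<le> infdist a0 (- M)"
      using le_infdist_compl_if_ball_subset[OF squeezing_ball_around_disc_centre[OF sq M ab nM r disc] nM]
      by blast
    moreover have "a0 \<in> M" using disc[of 0] r by simp
    ultimately have "- e - Re (poly p 0) \<le> ln (infdist a0 (- M))"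
      using d_pos by (simp add: ln_ge_iff)
    then show "- ln (infdist a0 (- M)) \<le> Re (poly p 0) + e" by simp
  qed
qed

theorem lemma2:
  fixes M :: "(complex ^ 'n) set"
  assumes "domain M" and "bounded M" and "uniform_squeezing M"
  shows "pseudoconvex M"
proof -
  obtain a b where ab: "0 < a" "a < b" and sq: "squeezing_bounds a b M"
    using assms(3) uniform_squeezing_iff_squeezing_bounds by blast
  have M: "open M" using assms(1) by (simp add: domain_def)
  have nM: "- M \<noteq> {}" using assms(2) not_bounded_UNIV by (metis Compl_empty_eq double_complement)
  have "infdist z (- M) \<noteq> 0" if "z \<in> M" for z
    using infdist_pos_not_in_closed[OF closed_Compl[OF M] nM] that by fastforce
  then have "continuous_on M (\<lambda>z. - ln (infdist z (- M)))"
    by (auto intro!: continuous_intros)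
  moreover have "- ln (infdist a0 (- M)) \<le>
      integral {0..2*pi} (\<lambda>t. - ln (infdist (a0 + (of_real r * cis t) *s w) (- M))) / (2*pi)"
    if "a0 \<in> M \<and> 0 < r \<and> (\<forall>\<zeta>. cmod \<zeta> \<le> r \<longrightarrow> a0 + \<zeta> *s w \<in> M)" for a0 w r
    using squeezing_neg_ln_infdist_sub_mean_value[OF sq M ab nM, of r a0 w] that by blast
  ultimately show ?thesis unfolding pseudoconvex_def plurisubharmonic_on_def by blast
qed

end
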